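(* In the elastoplastic setting described in the context, let $(\mathbf{a}^*,\mathbf{b}^*,\mathbf{c}^* )$ be the solution of $\mathbf{F}(\mathbf{a}^*,\mathbf{b}^*,\mathbf{c}^* )=\mathbf{0}$, and let $\mathbf{H}^*\in\partial\mathbf{F}(\mathbf{a}^*,\mathbf{b}^*,\mathbf{c}^* )$ with diagonal blocks $\mathbf{X}_i,\mathbf{Y}_i\in\mathbb{R}^{L\times L}$ ($i=1,\dots,N$) of its last block row, which are of the form $$\mathbf{X}_i=\tau_i\varrho\,\mathbf{c}^*_i\otimes\frac{\mathbf{v}^*_{\varrho,i}}{|\mathbf{v}^*_{\varrho,i}|}-\varrho\sigma_i\mathbf{I}_{L\times L},\qquad \mathbf{Y}_i=\tau_i\Big(\mathbf{c}^*_i\otimes\frac{\mathbf{v}^*_{\varrho,i}}{|\mathbf{v}^*_{\varrho,i}|}+(|\mathbf{v}^*_{\varrho,i}|-\sigma_i)\mathbf{I}_{L\times L}\Big)$$ with $\tau_i\in[0,1]$, $\tau_i=0$ if $|\mathbf{v}^*_{\varrho,i}|<\sigma_i$ and $\tau_i=1$ if $|\mathbf{v}^*_{\varrho,i}|>\sigma_i$, where $\mathbf{v}^*_{\varrho,i}=\mathbf{c}^*_i+\varrho\mathbf{b}^*_i$. Then for every $i\in\{1,\dots,N\}$ the pair $(\mathbf{X}_i,\mathbf{Y}_i)$ is eigencomplementary.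
   Context: Elastoplastic setting. Let $d\in\{2,3\}$, $\Omega\subset\mathbb{R}^d$ a bounded polygonal domain with Lipschitz boundary $\Gamma$, $\Gamma_D\subseteq\Gamma$ closed with positive surface measure, $\Gamma_N=\Gamma\setminus\Gamma_D$. $\mathbb{S}_{d,0}$ denotes the symmetric trace-free $d\times d$ matrices with Frobenius inner product. $\mathbb{C},\mathbb{H}$ are fourth-order elasticity and hardening tensors with the usual symmetries, uniformly elliptic and bounded; $\sigma_y>0$ constant. $V=\{\mathbf{v}\in H^1(\Omega,\mathbb{R}^d):\mathbf{v}|_{\Gamma_D}=\mathbf{0}\}$, $\mathbf{f}\in V^*$, $\mathbf{g}\in H^{-1/2}(\Gamma_N,\mathbb{R}^d)$, $\ell(\mathbf{v})=\langle\mathbf{f},\mathbf{v}\rangle+\langle\mathbf{g},\mathbf{v}\rangle_{\Gamma_N}$, $a((\mathbf{u},\mathbf{p}),(\mathbf{v},\mathbf{q}))=\int_\Omega\mathbb{C}(\boldsymbol\varepsilon(\mathbf{u})-\mathbf{p}):(\boldsymbol\varepsilon(\mathbf{v})-\mathbf{q})+\int_\Omega\mathbb{H}\mathbf{p}:\mathbf{q}$, $\boldsymbol\varepsilon(\mathbf{u})=\tfrac12(\nabla\mathbf{u}+\nabla\mathbf{u}^\top)$. $\mathcal{T}_h$ is a locally quasi-uniform mesh of convex shape-regular quadrilaterals/hexahedra with bi/trilinear bijections $\mathbf{M}_T:[-1,1]^d\to T$ and degrees $p_T\ge1$; $\mathbb{P}_p(\hat T)$ are polynomials of degree $\le p$ in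 each variable. $V_{hp}=\{\mathbf{v}\in V:\mathbf{v}|_T\circ\mathbf{M}_T\in\mathbb{P}_{p_T}(\hat T)^d\}$ with basis $\{\mathbf{e}_k\vartheta_i:k\le d,i\le M\}$. For each $T$, $\hat{\mathbf{x}}_{k,T}$ ($k\le n_T:=p_T^d$) are the tensor Gauss points and $\hat\phi_{k,T}\in\mathbb{P}_{p_T-1}(\hat T)$ the Lagrange basis at them; $\phi_1,\dots,\phi_N$ ($N=\sum_Tn_T$) equal $\hat\phi_{k,T}\circ\mathbf{M}_T^{-1}$ on $T$, $0$ elsewhere. $D_i=\int_\Omega\phi_i>0$, $\sigma_i=D_i^{-1}\int_\Omega\sigma_y\phi_i$. $L=\tfrac12(d-1)(d+2)$, $\boldsymbol\Phi_1,\dots,\boldsymbol\Phi_L$ a Frobenius-orthonormal basis of $\mathbb{S}_{d,0}$ (for $d=2$: $\tfrac1{\sqrt2}\operatorname{diag}(1,-1)$, $\tfrac1{\sqrt2}(\mathbf{e}_1\mathbf{e}_2^\top+\mathbf{e}_2\mathbf{e}_1^\top)$; for $d=3$: $\tfrac1{\sqrt2}\operatorname{diag}(1,-1,0)$, $\tfrac1{\sqrt6}\operatorname{diag}(1,1,-2)$, $\tfrac1{\sqrt2}(\mathbf{e}_j\mathbf{e}_k^\top+\mathbf{e}_k\mathbf{e}_j^\top)$ for $(j,k)=(1,2),(1,3),(2,3)$). Matrices: $A_{d(i-1)+k,d(j-1)+l}=a((\mathbf{e}_l\vartheta_j,\mathbf{0}),(\mathbf{e}_k\vartheta_i,\mathbf{0}))$;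 $C_{L(i-1)+k,L(j-1)+l}=a((\mathbf{0},\boldsymbol\Phi_l\phi_i),(\mathbf{0},\boldsymbol\Phi_k\phi_j))$; $\mathbf{D}=\operatorname{diag}(D_1\mathbf{I}_{L\times L},\dots,D_N\mathbf{I}_{L\times L})$; $B_{d(i-1)+k,L(j-1)+l}=-a((\mathbf{0},\boldsymbol\Phi_l\phi_j),(\mathbf{e}_k\vartheta_i,\mathbf{0}))$; $l_{d(i-1)+k}=-\ell(\mathbf{e}_k\vartheta_i)$. Fix $\varrho>0$. For $\mathbf{b},\mathbf{c}\in\mathbb{R}^{LN}$, $\mathbf{b}_i=(b_{L(i-1)+1},\dots,b_{Li})^\top$, $\mathbf{c}_i$ analogously, $\mathbf{v}_{\varrho,i}=\mathbf{c}_i+\varrho\mathbf{b}_i$, $\mathbf{S}_i(\mathbf{b}_i,\mathbf{c}_i)=\max\{\sigma_i,|\mathbf{v}_{\varrho,i}|\}\mathbf{c}_i-\sigma_i\mathbf{v}_{\varrho,i}$. $\mathbf{F}(\mathbf{a},\mathbf{b},\mathbf{c})=(\mathbf{A}\mathbf{a}+\mathbf{B}\mathbf{b}+\mathbf{l},\ \mathbf{B}^\top\mathbf{a}+\mathbf{C}\mathbf{b}+\mathbf{D}\mathbf{c},\ \mathbf{S}_1(\mathbf{b}_1,\mathbf{c}_1),\dots,\mathbf{S}_N(\mathbf{b}_N,\mathbf{c}_N))$; the equation $\mathbf{F}=\mathbf{0}$ has a unique solution (it is the algebraic form of the discrete mixed elastoplasticity problem). $\partial\mathbf{F}$ is the Clarke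 subdifferential; $\mathbf{x}\otimes\mathbf{y}=\mathbf{x}\mathbf{y}^\top$. A pair $(\mathbf{F},\mathbf{G})$ of real symmetric $L\times L$ matrices is eigencomplementary if $\mathbf{F}$ is negative semi-definite, $\mathbf{G}$ positive semi-definite, they share a basis of eigenvectors of $\mathbb{R}^L$, and, if both are singular, additionally $\bigoplus_{\xi\in\sigma(\mathbf{F}),\xi<0}\operatorname{Eig}_{\mathbf{F}}(\xi)=\operatorname{Eig}_{\mathbf{G}}(0)$. *)

theory Defs
  imports "HOL-Analysis.Analysis"
begin

definition outer :: "real^'l \<Rightarrow> real^'l \<Rightarrow> real^'l^'l" where
  "outer x y = (\<chi> j k. x $ j * y $ k)"

text \<open>Block i of a vector in R^(L N), indexed by pairs (block, component).\<close>
definition blk :: "real^('n::finite \<times> 'l::finite) \<Rightarrow> 'n \<Rightarrow> real^'l" where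
  "blk b i = (\<chi> k. b $ (i, k))"

text \<open>The block diagonal matrix D = diag(D_1 I, ..., D_N I) applied to c.\<close>
definition Dmul :: "('n \<Rightarrow> real) \<Rightarrow> real^('n::finite \<times> 'l::finite) \<Rightarrow> real^('n::finite \<times> 'l::finite)" where
  "Dmul D c = (\<chi> ik. D (fst ik) * c $ ik)"

definition vrho :: "real \<Rightarrow> real^('n::finite \<times> 'l::finite) \<Rightarrow> real^('n::finite \<times> 'l::finite) \<Rightarrow> 'n \<Rightarrow> real^'l" where
  "vrho \<rho> b c i = blk c i + \<rho> *\<^sub>R blk b i"

definition Sblk :: "real \<Rightarrow> ('n \<Rightarrow> real) \<Rightarrow> real^('n::finite \<times> 'l::finite) \<Rightarrow> real^('n::finite \<times> 'l::finite) \<Rightarrow> 'n \<Rightarrow> real^'l" where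
  "Sblk \<rho> \<sigma> b c i =
     max (\<sigma> i) (norm (vrho \<rho> b c i)) *\<^sub>R blk c i - \<sigma> i *\<^sub>R vrho \<rho> b c i"

definition Eig :: "real^'l^'l \<Rightarrow> real \<Rightarrow> (real^'l) set" where
  "Eig F \<xi> = {x. F *v x = \<xi> *\<^sub>R x}"

definition eigencomplementary :: "real^'l^'l \<Rightarrow> real^'l^'l \<Rightarrow> bool" where
  "eigencomplementary F G \<longleftrightarrow>
     transpose F = F \<and> transpose G = G \<and>
     (\<forall>x. x \<bullet> (F *v x) \<le> 0) \<and>
     (\<forall>x. 0 \<le> x \<bullet> (G *v x)) \<and>
     (\<exists>E. independent E \<and> span E = UNIV \<and>
          (\<forall>v\<in>E. (\<exists>\<xi>. F *v v = \<xi> *\<^sub>R v) \<and> (\<exists>\<mu>. G *v v = \<mu> *\<^sub>R v))) \<and>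
     ((\<not> invertible F \<and> \<not> invertible G) \<longrightarrow>
        span (\<Union>\<xi>\<in>{\<xi>. \<xi> < 0}. Eig F \<xi>) = Eig G 0)"

end

theory Submission
  imports Defs
begin

(* If |v| \<ge> \<sigma>, the equation S_i = 0 forces c_i = \<sigma> u with u = v/|v|, so X_i and Y_i are
   both of the form \<alpha> I + \<beta> u u^T. Such matrices act as \<alpha> on the orthogonal complement of u
   and as \<alpha> + \<beta> on u, hence share an eigenbasis, and their definiteness is read off the signs
   of \<alpha> and \<alpha> + \<beta>. Both are singular only if |v| = \<sigma> and \<tau> = 1, where X_i = -\<rho>\<sigma> (I - u u^T)
   and Y_i = \<sigma> u u^T: the negative eigenspace of the first and the kernel of the second are
   both the orthogonal complement of u. If |v| < \<sigma>, then \<tau> = 0, X_i = -\<rho>\<sigma> I and Y_i = 0. *)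

definition rank1_shift :: "real \<Rightarrow> real \<Rightarrow> real^'l::finite \<Rightarrow> real^'l^'l" where
  "rank1_shift \<alpha> \<beta> u = \<alpha> *\<^sub>R mat 1 + \<beta> *\<^sub>R outer u u"

lemma outer_mult_vec: "outer x y *v z = (y \<bullet> z) *\<^sub>R x"
  by (simp add: vec_eq_iff outer_def matrix_vector_mult_def inner_vec_def
      sum_distrib_left mult.commute mult.left_commute)

lemma outer_scaleR_left: "outer (s *\<^sub>R x) y = s *\<^sub>R outer x y"
  by (simp add: vec_eq_iff outer_def)

lemma rank1_shift_mult_vec: "rank1_shift \<alpha> \<beta> u *v x = \<alpha> *\<^sub>R x + (\<beta> * (u \<bullet> x)) *\<^sub>R u"
  by (simp add: rank1_shift_def matrix_vector_mult_add_rdistrib outer_mult_vec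
      scaleR_matrix_vector_assoc[symmetric])

lemma rank1_shift_mult_unit:
  assumes "norm u = 1"
  shows "rank1_shift \<alpha> \<beta> u *v u = (\<alpha> + \<beta>) *\<^sub>R u"
  using assms by (simp add: rank1_shift_mult_vec norm_eq_1 algebra_simps)

lemma rank1_shift_mult_orthogonal:
  assumes "u \<bullet> x = 0"
  shows "rank1_shift \<alpha> \<beta> u *v x = \<alpha> *\<^sub>R x"
  using assms by (simp add: rank1_shift_mult_vec)

lemma transpose_rank1_shift: "transpose (rank1_shift \<alpha> \<beta> u) = rank1_shift \<alpha> \<beta> u"
  by (simp add: vec_eq_iff rank1_shift_def outer_def transpose_def mat_def mult.commute)

lemma inner_rank1_shift: "x \<bullet> (rank1_shift \<alpha> \<beta> u *v x) = \<alpha> * (norm x)\<^sup>2 + \<beta> * (u \<bullet> x)\<^sup>2"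
  by (simp add: rank1_shift_mult_vec inner_add_right inner_commute power2_eq_square
      flip: power2_norm_eq_inner)

lemma rank1_shift_psd:
  assumes "norm u = 1" "0 \<le> \<alpha>" "0 \<le> \<alpha> + \<beta>"
  shows "0 \<le> x \<bullet> (rank1_shift \<alpha> \<beta> u *v x)"
proof (cases "0 \<le> \<beta>")
  case True
  then show ?thesis using assms by (simp add: inner_rank1_shift)
next
  case False
  have "\<bar>u \<bullet> x\<bar> \<le> norm x" using Cauchy_Schwarz_ineq2[of u x] assms(1) by simp
  then have "(u \<bullet> x)\<^sup>2 \<le> (norm x)\<^sup>2" by (metis abs_le_square_iff abs_norm_cancel)
  then have "\<beta> * (norm x)\<^sup>2 \<le> \<beta> * (u \<bullet> x)\<^sup>2" using False by (simp add: mult_left_mono_neg)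
  moreover have "0 \<le> (\<alpha> + \<beta>) * (norm x)\<^sup>2" using assms(3) by simp
  ultimately show ?thesis by (simp add: inner_rank1_shift algebra_simps)
qed

lemma rank1_shift_nsd:
  assumes "norm u = 1" "\<alpha> \<le> 0" "\<alpha> + \<beta> \<le> 0"
  shows "x \<bullet> (rank1_shift \<alpha> \<beta> u *v x) \<le> 0"
  using rank1_shift_psd[of u "- \<alpha>" "- \<beta>" x] assms by (simp add: inner_rank1_shift)

lemma invertible_rank1_shift:
  assumes "norm u = 1" "\<alpha> \<noteq> 0" "\<alpha> + \<beta> \<noteq> 0"
  shows "invertible (rank1_shift \<alpha> \<beta> u)"
  unfolding invertible_left_inverse matrix_left_invertible_ker
proof (intro allI impI)
  fix x
  assume ker: "rank1_shift \<alpha> \<beta> u *v x = 0"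
  then have "u \<bullet> (rank1_shift \<alpha> \<beta> u *v x) = 0" by simp
  then have "(\<alpha> + \<beta>) * (u \<bullet> x) = 0"
    using assms(1) by (simp add: rank1_shift_mult_vec norm_eq_1 algebra_simps)
  then have "u \<bullet> x = 0" using assms(3) by simp
  then show "x = 0" using ker assms(2) by (simp add: rank1_shift_mult_orthogonal)
qed

lemma Eig_rank1_shift_zero:
  assumes "norm u = 1" "\<beta> \<noteq> 0"
  shows "Eig (rank1_shift 0 \<beta> u) 0 = {x. u \<bullet> x = 0}"
proof -
  have "u \<noteq> 0" using assms(1) by auto
  then show ?thesis using assms(2) by (auto simp: Eig_def rank1_shift_mult_vec)
qed

lemma span_negative_eigenspaces_rank1_shift:
  assumes "norm u = 1" "\<alpha> < 0" "0 \<le> \<alpha> + \<beta>"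
  shows "span (\<Union>\<xi>\<in>{\<xi>. \<xi> < 0}. Eig (rank1_shift \<alpha> \<beta> u) \<xi>) = {x. u \<bullet> x = 0}"
    (is "span ?N = ?U")
proof -
  have "?N \<subseteq> ?U"
  proof safe
    fix \<xi> x
    assume "\<xi> < 0" and "x \<in> Eig (rank1_shift \<alpha> \<beta> u) \<xi>"
    then have "u \<bullet> (rank1_shift \<alpha> \<beta> u *v x) = u \<bullet> (\<xi> *\<^sub>R x)" by (simp add: Eig_def)
    then have "(\<alpha> + \<beta> - \<xi>) * (u \<bullet> x) = 0"
      using assms(1) by (simp add: rank1_shift_mult_vec norm_eq_1 algebra_simps)
    then show "u \<bullet> x = 0" using \<open>\<xi> < 0\<close> assms(3) by simp
  qed
  moreover have "?U \<subseteq> ?N"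
    using assms(2) by (auto simp: Eig_def rank1_shift_mult_orthogonal)
  moreover have "subspace ?U"
    using subspace_orthogonal_to_vector[of u] by (simp add: orthogonal_def)
  ultimately show ?thesis by (metis span_minimal span_superset subset_antisym)
qed

lemma basis_insert_orthogonal_complement:
  fixes u :: "'a::euclidean_space"
  assumes "u \<noteq> 0"
  obtains B where "B \<subseteq> {x. u \<bullet> x = 0}" "independent (insert u B)" "span (insert u B) = UNIV"
proof -
  let ?U = "{x. u \<bullet> x = 0}"
  have "subspace ?U" using subspace_orthogonal_to_vector[of u] by (simp add: orthogonal_def)
  obtain B where B: "B \<subseteq> ?U" "independent B" "?U \<subseteq> span B"
    by (rule basis_exists[of ?U]) blast
  have "span B \<subseteq> ?U" using B(1) \<open>subspace ?U\<close> by (rule span_minimal)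
  then have "u \<notin> span B" using assms by auto
  then have "independent (insert u B)" using B(2) by (rule independent_insertI)
  moreover have "x \<in> span (insert u B)" for x
  proof -
    have "x - (u \<bullet> x / (u \<bullet> u)) *\<^sub>R u \<in> ?U" using assms by (simp add: inner_diff_right)
    then have "x - (u \<bullet> x / (u \<bullet> u)) *\<^sub>R u \<in> span (insert u B)"
      using B(3) span_mono[of B "insert u B"] by auto
    moreover have "(u \<bullet> x / (u \<bullet> u)) *\<^sub>R u \<in> span (insert u B)"
      by (simp add: span_base span_scale)
    ultimately show ?thesis using span_add by fastforce
  qed
  ultimately show ?thesis using that B(1) by blast
qed

lemma rank1_shift_common_eigenbasis:
  assumes "norm u = 1"
  shows "\<exists>E. independent E \<and> span E = UNIV \<and>
           (\<forall>v\<in>E. (\<exists>\<xi>. rank1_shift \<alpha>\<^sub>1 \<beta>\<^sub>1 u *v v = \<xi> *\<^sub>R v) \<and>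
                  (\<exists>\<mu>. rank1_shift \<alpha>\<^sub>2 \<beta>\<^sub>2 u *v v = \<mu> *\<^sub>R v))"
proof -
  have "u \<noteq> 0" using assms by auto
  then obtain B where B: "B \<subseteq> {x. u \<bullet> x = 0}" "independent (insert u B)" "span (insert u B) = UNIV"
    by (rule basis_insert_orthogonal_complement)
  have "\<exists>\<xi>. rank1_shift \<alpha> \<beta> u *v v = \<xi> *\<^sub>R v" if "v \<in> insert u B" for \<alpha> \<beta> v
    using that B(1) rank1_shift_mult_unit[OF assms] rank1_shift_mult_orthogonal by blast
  then show ?thesis using B(2,3) by blast
qed

lemma eigencomplementary_rank1_shift:
  assumes "norm u = 1"
    and "\<alpha>\<^sub>1 \<le> 0" "\<alpha>\<^sub>1 + \<beta>\<^sub>1 \<le> 0" "0 \<le> \<alpha>\<^sub>2" "0 \<le> \<alpha>\<^sub>2 + \<beta>\<^sub>2"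
    and "\<not> invertible (rank1_shift \<alpha>\<^sub>1 \<beta>\<^sub>1 u) \<and> \<not> invertible (rank1_shift \<alpha>\<^sub>2 \<beta>\<^sub>2 u) \<longrightarrow>
           span (\<Union>\<xi>\<in>{\<xi>. \<xi> < 0}. Eig (rank1_shift \<alpha>\<^sub>1 \<beta>\<^sub>1 u) \<xi>) = Eig (rank1_shift \<alpha>\<^sub>2 \<beta>\<^sub>2 u) 0"
  shows "eigencomplementary (rank1_shift \<alpha>\<^sub>1 \<beta>\<^sub>1 u) (rank1_shift \<alpha>\<^sub>2 \<beta>\<^sub>2 u)"
  unfolding eigencomplementary_def
  using assms transpose_rank1_shift rank1_shift_nsd rank1_shift_psd rank1_shift_common_eigenbasis
  by blast

lemma eigencomplementary_rank1_shift_projections: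
  assumes "norm u = 1" "0 < k" "0 < s"
  shows "eigencomplementary (rank1_shift (- k) k u) (rank1_shift 0 s u)"
  using assms span_negative_eigenspaces_rank1_shift[of u "- k" k] Eig_rank1_shift_zero[of u s]
  by (intro eigencomplementary_rank1_shift) auto

lemma eigencomplementary_rank1_shift_plastic:
  assumes u: "norm u = 1"
    and "0 < \<rho>" "0 < \<sigma>" "0 \<le> \<tau>" "\<tau> \<le> 1" "\<sigma> \<le> n" "\<sigma> < n \<Longrightarrow> \<tau> = 1"
  shows "eigencomplementary (rank1_shift (- (\<rho> * \<sigma>)) (\<tau> * \<rho> * \<sigma>) u)
                            (rank1_shift (\<tau> * (n - \<sigma>)) (\<tau> * \<sigma>) u)"
proof -
  consider "\<tau> < 1" | "\<tau> = 1" "n = \<sigma>" | "\<tau> = 1" "\<sigma> < n"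
    using assms(5,6) by linarith
  then show ?thesis
  proof cases
    case 1
    have "- (\<rho> * \<sigma>) + \<tau> * \<rho> * \<sigma> = (\<tau> - 1) * (\<rho> * \<sigma>)" by (simp add: algebra_simps)
    also have "\<dots> < 0" using 1 assms(2,3) by (simp add: mult_neg_pos)
    finally have "- (\<rho> * \<sigma>) + \<tau> * \<rho> * \<sigma> < 0" .
    moreover from this have "invertible (rank1_shift (- (\<rho> * \<sigma>)) (\<tau> * \<rho> * \<sigma>) u)"
      using assms(2,3) by (intro invertible_rank1_shift[OF u]) auto
    ultimately show ?thesis
      using assms(2-4,6) by (intro eigencomplementary_rank1_shift[OF u]) auto
  next
    case 2
    then show ?thesis using eigencomplementary_rank1_shift_projections[OF u] assms(2,3) by simp
  next
    case 3
    then show ?thesis using assms(2,3) invertible_rank1_shift[OF u, of "n - \<sigma>" \<sigma>]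
      by (intro eigencomplementary_rank1_shift[OF u]) auto
  qed
qed

lemma eigencomplementary_block:
  fixes c v :: "real^'l::finite"
  assumes "0 < \<rho>" "0 < \<sigma>" "0 \<le> \<tau>" "\<tau> \<le> 1"
    and S: "max \<sigma> (norm v) *\<^sub>R c - \<sigma> *\<^sub>R v = 0"
    and "norm v < \<sigma> \<Longrightarrow> \<tau> = 0" "\<sigma> < norm v \<Longrightarrow> \<tau> = 1"
  shows "eigencomplementary
           ((\<tau> * \<rho>) *\<^sub>R outer c ((1 / norm v) *\<^sub>R v) - (\<rho> * \<sigma>) *\<^sub>R mat 1)
           (\<tau> *\<^sub>R (outer c ((1 / norm v) *\<^sub>R v) + (norm v - \<sigma>) *\<^sub>R mat 1))"
proof (cases "norm v < \<sigma>")
  case True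
  define u :: "real^'l" where "u = axis undefined 1"
  have u: "norm u = 1" by (simp add: u_def)
  have "eigencomplementary (rank1_shift (- (\<rho> * \<sigma>)) 0 u) (rank1_shift 0 0 u)"
    using assms(1,2) invertible_rank1_shift[OF u, of "- (\<rho> * \<sigma>)" 0]
    by (intro eigencomplementary_rank1_shift[OF u]) auto
  then show ?thesis using True assms(6) by (simp add: rank1_shift_def)
next
  case False
  define n where "n = norm v"
  define u where "u = (1 / n) *\<^sub>R v"
  have "0 < n" unfolding n_def using False assms(2) by linarith
  then have u: "norm u = 1" by (simp add: u_def n_def)
  have "n *\<^sub>R c = \<sigma> *\<^sub>R v" using S False by (simp add: n_def max_def)
  then have "(1 / n) *\<^sub>R (n *\<^sub>R c) = \<sigma> *\<^sub>R u" by (simp add: u_def)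
  then have c: "c = \<sigma> *\<^sub>R u" using \<open>0 < n\<close> by simp
  have "eigencomplementary (rank1_shift (- (\<rho> * \<sigma>)) (\<tau> * \<rho> * \<sigma>) u)
                           (rank1_shift (\<tau> * (n - \<sigma>)) (\<tau> * \<sigma>) u)"
    using False assms(1-4,7) by (intro eigencomplementary_rank1_shift_plastic[OF u]) (auto simp: n_def)
  moreover have "(1 / norm v) *\<^sub>R v = u" by (simp add: u_def n_def)
  ultimately show ?thesis
    by (simp add: c outer_scaleR_left rank1_shift_def n_def algebra_simps)
qed

theorem lemma4p2:
  fixes d :: nat and \<rho> \<sigma>\<^sub>y :: real
    and \<sigma> D :: "'n::finite \<Rightarrow> real"
    and A :: "real^'m^'m" and B :: "real^('n \<times> 'l::finite)^'m" and C :: "real^('n \<times> 'l)^('n \<times> 'l)"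
    and l :: "real^'m"
    and a :: "real^'m" and b c :: "real^('n \<times> 'l)"
    and \<tau> :: "'n \<Rightarrow> real" and X Y :: "'n \<Rightarrow> real^'l^'l"
  assumes d: "d \<in> {2, 3}"
    and L: "CARD('l) = (d - 1) * (d + 2) div 2"
    and rho: "\<rho> > 0"
    and sy: "\<sigma>\<^sub>y > 0"
    and sigma: "\<forall>i. \<sigma> i = \<sigma>\<^sub>y"
    and Dpos: "\<forall>i. D i > 0"
    and F1: "A *v a + B *v b + l = 0"
    and F2: "transpose B *v a + C *v b + Dmul D c = 0"
    and F3: "\<forall>i. Sblk \<rho> \<sigma> b c i = 0"
    and tau: "\<forall>i. 0 \<le> \<tau> i \<and> \<tau> i \<le> 1"
    and tau0: "\<forall>i. norm (vrho \<rho> b c i) < \<sigma> i \<longrightarrow> \<tau> i = 0"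
    and tau1: "\<forall>i. norm (vrho \<rho> b c i) > \<sigma> i \<longrightarrow> \<tau> i = 1"
    and Xdef: "\<forall>i. X i = (\<tau> i * \<rho>) *\<^sub>R
                 outer (blk c i) ((1 / norm (vrho \<rho> b c i)) *\<^sub>R vrho \<rho> b c i)
               - (\<rho> * \<sigma> i) *\<^sub>R mat 1"
    and Ydef: "\<forall>i. Y i = \<tau> i *\<^sub>R
                 (outer (blk c i) ((1 / norm (vrho \<rho> b c i)) *\<^sub>R vrho \<rho> b c i)
                  + (norm (vrho \<rho> b c i) - \<sigma> i) *\<^sub>R mat 1)"
  shows "\<forall>i. eigencomplementary (X i) (Y i)"
proof
  fix i
  have "0 < \<sigma> i" using sigma sy by simp
  moreover have "max (\<sigma> i) (norm (vrho \<rho> b c i)) *\<^sub>R blk c i - \<sigma> i *\<^sub>R vrho \<rho> b c i = 0"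
    using F3 by (simp add: Sblk_def)
  ultimately show "eigencomplementary (X i) (Y i)"
    unfolding Xdef[rule_format] Ydef[rule_format]
    using rho tau tau0 tau1 by (intro eigencomplementary_block) auto
qed

end
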